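(* For every $n\ge 3$, $\beta(P_\infty\,\Box\, C_n)=2$ if $n$ is odd and $\beta(P_\infty\,\Box\, C_n)=3$ if $n$ is even. Moreover, $\{(0,0),(0,\tfrac{n-1}{2})\}$ is a metric basis of $P_\infty\,\Box\, C_n$ when $n$ is odd, and $\{(0,0),(0,\tfrac n2),(0,1)\}$ is a metric basis when $n$ is even.
   Context: $P_\infty$ has vertex set $\mathbb N=\{0,1,2,\dots\}$ with $i,j$ adjacent iff $|i-j|=1$. $C_n$ has vertex set $\{0,1,\dots,n-1\}$, with $0\le i\le j\le n-1$ adjacent iff $j-i=1$ or $j-i=n-1$. The cartesian product $G\Box H$ has vertex set $V(G)\times V(H)$, where $(a,v)$ is adjacent to $(b,w)$ iff either $a=b$ and $vw\in E(H)$, or $v=w$ and $ab\in E(G)$. A vertex $x$ resolves $u,v$ if $d(u,x)\ne d(v,x)$ (shortest-path distance); a resolving set is a set of vertices resolving every pair of distinct vertices; $\beta$ is the minimum cardinality of a resolving set ($\infty$ if none is finite), and a metric basis is a resolving set of cardinality $\beta$. *)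

theory Defs
  imports Main "HOL-Library.Extended_Nat"
begin

definition edges :: "'a set \<Rightarrow> ('a \<Rightarrow> 'a \<Rightarrow> bool) \<Rightarrow> ('a \<times> 'a) set" where
  "edges V adj = {(u, v). u \<in> V \<and> v \<in> V \<and> adj u v}"

text \<open>Shortest-path distance: least k such that there is a walk of length k from u to v
  (the graphs considered here are connected).\<close>
definition gdist :: "'a set \<Rightarrow> ('a \<Rightarrow> 'a \<Rightarrow> bool) \<Rightarrow> 'a \<Rightarrow> 'a \<Rightarrow> nat" where
  "gdist V adj u v = (LEAST k. (u, v) \<in> (edges V adj) ^^ k)"

definition resolves :: "'a set \<Rightarrow> ('a \<Rightarrow> 'a \<Rightarrow> bool) \<Rightarrow> 'a \<Rightarrow> 'a \<Rightarrow> 'a \<Rightarrow> bool" where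
  "resolves V adj x u v \<longleftrightarrow> gdist V adj u x \<noteq> gdist V adj v x"

definition resolving_set :: "'a set \<Rightarrow> ('a \<Rightarrow> 'a \<Rightarrow> bool) \<Rightarrow> 'a set \<Rightarrow> bool" where
  "resolving_set V adj S \<longleftrightarrow> S \<subseteq> V \<and>
     (\<forall>u\<in>V. \<forall>v\<in>V. u \<noteq> v \<longrightarrow> (\<exists>x\<in>S. resolves V adj x u v))"

text \<open>Metric dimension; \<infinity> if no finite resolving set exists (Inf {} = \<infinity> in enat).\<close>
definition metric_dim :: "'a set \<Rightarrow> ('a \<Rightarrow> 'a \<Rightarrow> bool) \<Rightarrow> enat" where
  "metric_dim V adj = Inf {enat (card S) | S. finite S \<and> resolving_set V adj S}"

definition metric_basis :: "'a set \<Rightarrow> ('a \<Rightarrow> 'a \<Rightarrow> bool) \<Rightarrow> 'a set \<Rightarrow> bool" where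
  "metric_basis V adj S \<longleftrightarrow> finite S \<and> resolving_set V adj S \<and> enat (card S) = metric_dim V adj"

definition path_inf_adj :: "nat \<Rightarrow> nat \<Rightarrow> bool" where
  "path_inf_adj i j \<longleftrightarrow> i = j + 1 \<or> j = i + 1"

definition cycle_adj :: "nat \<Rightarrow> nat \<Rightarrow> nat \<Rightarrow> bool" where
  "cycle_adj n i j \<longleftrightarrow>
     (i \<le> j \<and> (j - i = 1 \<or> j - i = n - 1)) \<or> (j \<le> i \<and> (i - j = 1 \<or> i - j = n - 1))"

definition cycle_vertices :: "nat \<Rightarrow> nat set" where
  "cycle_vertices n = {0..<n}"

definition box_adj :: "('a \<Rightarrow> 'a \<Rightarrow> bool) \<Rightarrow> ('b \<Rightarrow> 'b \<Rightarrow> bool) \<Rightarrow> 'a \<times> 'b \<Rightarrow> 'a \<times> 'b \<Rightarrow> bool" where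
  "box_adj adjG adjH p q \<longleftrightarrow>
     (fst p = fst q \<and> adjH (snd p) (snd q)) \<or> (snd p = snd q \<and> adjG (fst p) (fst q))"

definition PC_vertices :: "nat \<Rightarrow> (nat \<times> nat) set" where
  "PC_vertices n = (UNIV :: nat set) \<times> cycle_vertices n"

definition PC_adj :: "nat \<Rightarrow> nat \<times> nat \<Rightarrow> nat \<times> nat \<Rightarrow> bool" where
  "PC_adj n = box_adj path_inf_adj (cycle_adj n)"

end

theory Submission
  imports Defs
begin

(*
  The proof has three layers.
  (1) Generic facts about resolving sets in an arbitrary graph: resolving sets are those with no
      indistinguishable pair of distinct vertices, so a uniform supply of indistinguishable pairs
      for every one (two) landmarks bounds every resolving set from below by 2 (3); a resolving set
      meeting such a bound is a metric basis.
  (2) The distance formula d((a,i),(b,j)) = |a - b| + d_C(i,j), proved by showing that the right-hand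
      side is 1-Lipschitz along edges and always decreases along some edge.
  (3) Cycle computations: with landmarks on the boundary layer {0} \<times> C_n, the distance vectors
      are injective (so the proposed sets resolve); conversely, indistinguishable pairs in C_n
      (twins, or a simultaneous step away from both landmarks compensated on the path) lift to the
      cylinder, giving the lower bounds 2 in general and 3 for even n.
*)

definition indistinguishable ::
  "'a set \<Rightarrow> ('a \<Rightarrow> 'a \<Rightarrow> bool) \<Rightarrow> 'a set \<Rightarrow> 'a \<Rightarrow> 'a \<Rightarrow> bool" where
  "indistinguishable V adj S u v \<longleftrightarrow> (\<forall>x\<in>S. gdist V adj u x = gdist V adj v x)"

lemma resolving_setI:
  assumes "S \<subseteq> V"
    and "\<And>u v. u \<in> V \<Longrightarrow> v \<in> V \<Longrightarrow> indistinguishable V adj S u v \<Longrightarrow> u = v"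
  shows "resolving_set V adj S"
  using assms unfolding resolving_set_def resolves_def indistinguishable_def by blast

lemma not_resolving_if_indistinguishable:
  assumes "u \<in> V" "v \<in> V" "u \<noteq> v" "indistinguishable V adj T u v" "S \<subseteq> T"
  shows "\<not> resolving_set V adj S"
  using assms unfolding resolving_set_def resolves_def indistinguishable_def by blast

lemma subset_of_pair:
  assumes "finite S" "card S \<le> 2" "S \<subseteq> V" "V \<noteq> {}"
  shows "\<exists>x\<in>V. \<exists>y\<in>V. S \<subseteq> {x, y} \<and> (card S \<le> 1 \<longrightarrow> x = y)"
proof -
  consider "card S = 0" | "card S = 1" | "card S = 2" using assms(2) by linarith
  then show ?thesis
  proof cases
    case 1
    then have "S = {}" using assms(1) by simp
    moreover obtain z where "z \<in> V" using assms(4) by blast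
    ultimately show ?thesis by blast
  next
    case 2
    then obtain z where "S = {z}" by (rule card_1_singletonE)
    then show ?thesis using assms(3) by blast
  next
    case 3
    then obtain z w where "S = {z, w}" by (meson card_2_iff)
    then show ?thesis using 3 assms(3) by auto
  qed
qed

lemma resolving_card_ge_2:
  assumes "V \<noteq> {}"
    and "\<And>x. x \<in> V \<Longrightarrow> \<exists>u\<in>V. \<exists>v\<in>V. u \<noteq> v \<and> indistinguishable V adj {x} u v"
    and "finite S" "resolving_set V adj S"
  shows "2 \<le> card S"
proof (rule ccontr)
  assume "\<not> 2 \<le> card S"
  then have "card S \<le> 1" by simp
  moreover have "S \<subseteq> V" using assms(4) by (simp add: resolving_set_def)
  ultimately obtain x where "x \<in> V" "S \<subseteq> {x}"
    using subset_of_pair[OF assms(3) _ _ assms(1)] by fastforce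
  obtain u v where "u \<in> V" "v \<in> V" "u \<noteq> v" "indistinguishable V adj {x} u v"
    using assms(2)[OF \<open>x \<in> V\<close>] by blast
  then show False
    using assms(4) \<open>S \<subseteq> {x}\<close> not_resolving_if_indistinguishable[of u V v adj "{x}" S] by blast
qed

lemma resolving_card_ge_3:
  assumes "V \<noteq> {}"
    and "\<And>x y. x \<in> V \<Longrightarrow> y \<in> V \<Longrightarrow>
           \<exists>u\<in>V. \<exists>v\<in>V. u \<noteq> v \<and> indistinguishable V adj {x, y} u v"
    and "finite S" "resolving_set V adj S"
  shows "3 \<le> card S"
proof (rule ccontr)
  assume "\<not> 3 \<le> card S"
  then have "card S \<le> 2" by simp
  moreover have "S \<subseteq> V" using assms(4) by (simp add: resolving_set_def)
  ultimately obtain x y where "x \<in> V" "y \<in> V" "S \<subseteq> {x, y}"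
    using subset_of_pair[OF assms(3) _ _ assms(1)] by blast
  obtain u v where "u \<in> V" "v \<in> V" "u \<noteq> v" "indistinguishable V adj {x, y} u v"
    using assms(2)[OF \<open>x \<in> V\<close> \<open>y \<in> V\<close>] by blast
  then show False
    using assms(4) \<open>S \<subseteq> {x, y}\<close> not_resolving_if_indistinguishable[of u V v adj "{x, y}" S] by blast
qed

lemma metric_dim_eqI:
  assumes "finite B" "resolving_set V adj B"
    and "\<And>S. finite S \<Longrightarrow> resolving_set V adj S \<Longrightarrow> card B \<le> card S"
  shows "metric_dim V adj = enat (card B)" "metric_basis V adj B"
proof -
  show dim: "metric_dim V adj = enat (card B)"
    unfolding metric_dim_def
  proof (rule antisym)
    show "Inf {enat (card S) |S. finite S \<and> resolving_set V adj S} \<le> enat (card B)"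
      using assms by (intro Inf_lower) auto
    show "enat (card B) \<le> Inf {enat (card S) |S. finite S \<and> resolving_set V adj S}"
      using assms by (intro Inf_greatest) auto
  qed
  show "metric_basis V adj B"
    using assms dim unfolding metric_basis_def by simp
qed

definition line_dist :: "nat \<Rightarrow> nat \<Rightarrow> nat" where
  "line_dist i j = (if i \<le> j then j - i else i - j)"

definition cycle_dist :: "nat \<Rightarrow> nat \<Rightarrow> nat \<Rightarrow> nat" where
  "cycle_dist n i j = min (line_dist i j) (n - line_dist i j)"

definition cyl_dist :: "nat \<Rightarrow> nat \<times> nat \<Rightarrow> nat \<times> nat \<Rightarrow> nat" where
  "cyl_dist n p q = line_dist (fst p) (fst q) + cycle_dist n (snd p) (snd q)"

lemma cycle_dist_sym: "cycle_dist n i j = cycle_dist n j i"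
  by (simp add: cycle_dist_def line_dist_def)

lemma cycle_dist_neighbour:
  assumes "i < n" "i' < n" "k < n" "cycle_adj n i i'"
  shows "cycle_dist n i' k \<le> cycle_dist n i k + 1"
  using assms unfolding cycle_adj_def cycle_dist_def line_dist_def by (auto split: if_splits)

lemma cycle_dist_toward:
  assumes "i < n" "j < n" "i \<noteq> j"
  obtains i' where "i' < n" "cycle_adj n i i'" "cycle_dist n i' j + 1 = cycle_dist n i j"
proof -
  consider "i < j" "j - i \<le> n - (j - i)" | "i < j" "\<not> j - i \<le> n - (j - i)"
    | "j < i" "i - j \<le> n - (i - j)" | "j < i" "\<not> i - j \<le> n - (i - j)"
    using assms by linarith
  then show ?thesis
  proof cases
    case 1 then show ?thesis using assms
      by (intro that[of "i + 1"]) (auto simp: cycle_adj_def cycle_dist_def line_dist_def)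
  next
    case 2 then show ?thesis using assms
      by (intro that[of "if i > 0 then i - 1 else n - 1"])
         (auto simp: cycle_adj_def cycle_dist_def line_dist_def)
  next
    case 3 then show ?thesis using assms
      by (intro that[of "i - 1"]) (auto simp: cycle_adj_def cycle_dist_def line_dist_def)
  next
    case 4 then show ?thesis using assms
      by (intro that[of "if i + 1 < n then i + 1 else 0"])
         (auto simp: cycle_adj_def cycle_dist_def line_dist_def)
  qed
qed

abbreviation cyl_edges :: "nat \<Rightarrow> ((nat \<times> nat) \<times> (nat \<times> nat)) set" where
  "cyl_edges n \<equiv> edges (PC_vertices n) (PC_adj n)"

text \<open>cyl_dist is 1-Lipschitz along edges, so it is a lower bound for the length of every walk.\<close>
lemma cyl_dist_edge:
  assumes "(w, q) \<in> cyl_edges n" "r \<in> PC_vertices n"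
  shows "cyl_dist n r q \<le> cyl_dist n r w + 1"
proof -
  obtain a i b j c k where wqr: "w = (a, i)" "q = (b, j)" "r = (c, k)"
    by (metis prod.exhaust)
  have bounds: "i < n" "j < n" "k < n"
    using assms wqr by (auto simp: edges_def PC_vertices_def cycle_vertices_def)
  have "(a = b \<and> cycle_adj n i j) \<or> (i = j \<and> path_inf_adj a b)"
    using assms(1) wqr by (auto simp: edges_def PC_adj_def box_adj_def)
  then show ?thesis
  proof
    assume "a = b \<and> cycle_adj n i j"
    then have "cycle_dist n k j \<le> cycle_dist n k i + 1"
      using cycle_dist_neighbour[OF bounds] by (simp add: cycle_dist_sym)
    then show ?thesis using \<open>a = b \<and> _\<close> wqr by (simp add: cyl_dist_def)
  next
    assume "i = j \<and> path_inf_adj a b"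
    then show ?thesis using wqr by (auto simp: cyl_dist_def line_dist_def path_inf_adj_def)
  qed
qed

lemma cyl_dist_le_walk:
  assumes "(p, q) \<in> cyl_edges n ^^ k" "p \<in> PC_vertices n"
  shows "cyl_dist n p q \<le> k"
  using assms(1)
proof (induction k arbitrary: q)
  case 0
  then show ?case by (simp add: cyl_dist_def line_dist_def cycle_dist_def)
next
  case (Suc k)
  then obtain w where "(p, w) \<in> cyl_edges n ^^ k" "(w, q) \<in> cyl_edges n"
    by auto
  with Suc.IH cyl_dist_edge[OF _ assms(2)] show ?case by fastforce
qed

text \<open>Conversely, from p one can always step to a neighbour one unit closer to q, which yields
  a walk of length exactly cyl_dist n p q.\<close>
lemma cyl_step_toward:
  assumes "p \<in> PC_vertices n" "q \<in> PC_vertices n" "cyl_dist n p q = Suc d"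
  obtains w where "(p, w) \<in> cyl_edges n" "w \<in> PC_vertices n" "cyl_dist n w q = d"
proof -
  obtain a i b j where pq: "p = (a, i)" "q = (b, j)" by (metis prod.exhaust)
  have bounds: "i < n" "j < n" using assms pq by (auto simp: PC_vertices_def cycle_vertices_def)
  show ?thesis
  proof (cases "a = b")
    case False
    show ?thesis
      by (rule that[of "(if a < b then a + 1 else a - 1, i)"])
         (use False bounds assms(3) pq in \<open>auto simp: edges_def PC_vertices_def cycle_vertices_def
            PC_adj_def box_adj_def path_inf_adj_def cyl_dist_def line_dist_def\<close>)
  next
    case True
    then have "i \<noteq> j" using assms(3) pq by (auto simp: cyl_dist_def line_dist_def cycle_dist_def)
    then obtain i' where "i' < n" "cycle_adj n i i'" "cycle_dist n i' j + 1 = cycle_dist n i j"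
      using cycle_dist_toward[OF bounds] by blast
    then show ?thesis
      by (intro that[of "(a, i')"])
         (use True bounds assms(3) pq in \<open>auto simp: edges_def PC_vertices_def cycle_vertices_def
            PC_adj_def box_adj_def cyl_dist_def line_dist_def\<close>)
  qed
qed

lemma cyl_walk_of_dist:
  assumes "p \<in> PC_vertices n" "q \<in> PC_vertices n"
  shows "(p, q) \<in> cyl_edges n ^^ cyl_dist n p q"
  using assms(1)
proof (induction "cyl_dist n p q" arbitrary: p)
  case 0
  then have "p = q" using assms(2)
    by (auto simp: cyl_dist_def line_dist_def cycle_dist_def PC_vertices_def cycle_vertices_def
        split: if_splits)
  then show ?case by (simp add: cyl_dist_def line_dist_def cycle_dist_def)
next
  case (Suc d)
  obtain w where w: "(p, w) \<in> cyl_edges n" "w \<in> PC_vertices n" "cyl_dist n w q = d"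
    using cyl_step_toward[OF Suc.prems assms(2) Suc.hyps(2)[symmetric]] by blast
  have "(w, q) \<in> cyl_edges n ^^ d" using Suc.hyps(1)[of w] w by simp
  with w(1) show ?case using Suc.hyps(2) by (metis relpow_Suc_I2)
qed

lemma gdist_cyl:
  assumes "p \<in> PC_vertices n" "q \<in> PC_vertices n"
  shows "gdist (PC_vertices n) (PC_adj n) p q = cyl_dist n p q"
  unfolding gdist_def
  by (rule Least_equality) (use cyl_walk_of_dist[OF assms] cyl_dist_le_walk[OF _ assms(1)] in auto)

lemma gdist_to_first_layer:
  assumes "(a, i) \<in> PC_vertices n" "k < n"
  shows "gdist (PC_vertices n) (PC_adj n) (a, i) (0, k) = a + cycle_dist n i k"
proof -
  have "(0, k) \<in> PC_vertices n" using assms(2) by (simp add: PC_vertices_def cycle_vertices_def)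
  then show ?thesis using gdist_cyl[OF assms(1)] by (simp add: cyl_dist_def line_dist_def)
qed

lemma cycle_dist_odd:
  assumes "n = 2 * m + 1" "i < n"
  shows "cycle_dist n i 0 = (if i \<le> m then i else n - i)"
    and "cycle_dist n i m = (if i \<le> m then m - i else i - m)"
  using assms unfolding cycle_dist_def line_dist_def by auto

lemma cycle_dist_even:
  assumes "n = 2 * m" "m \<ge> 2" "i < n"
  shows "cycle_dist n i 0 = (if i \<le> m then i else n - i)"
    and "cycle_dist n i m = (if i \<le> m then m - i else i - m)"
    and "cycle_dist n i 1 = (if i = 0 then 1 else if i \<le> m + 1 then i - 1 else n + 1 - i)"
  using assms unfolding cycle_dist_def line_dist_def by auto

text \<open>In the odd case
  the mixed cases would force the parity contradiction 2(i+j) = 4m+1; in the even case they force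
  i + j = n (reflection in the axis through 0 and m), which the landmark 1 rules out.\<close>
lemma odd_cylinder_coordinates_inj:
  assumes "n = 2 * m + 1" "m \<ge> 1" "i < n" "j < n"
    and "a + cycle_dist n i 0 = b + cycle_dist n j 0"
    and "a + cycle_dist n i m = b + cycle_dist n j m"
  shows "a = b \<and> i = j"
proof -
  note e = assms(5,6)[unfolded cycle_dist_odd[OF assms(1) assms(3)] cycle_dist_odd[OF assms(1) assms(4)]]
  consider "i \<le> m" "j \<le> m" | "i \<le> m" "\<not> j \<le> m" | "\<not> i \<le> m" "j \<le> m" | "\<not> i \<le> m" "\<not> j \<le> m"
    by blast
  then show ?thesis
  proof cases
    case 1
    then have "a + i = b + j" "a + (m - i) = b + (m - j)" using e by simp_all
    then show ?thesis using 1 by (auto split: nat_diff_split_asm)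
  next
    case 2
    then have "a + i = b + (n - j)" "a + (m - i) = b + (j - m)" using e by simp_all
    then have "2 * (i + j) = 4 * m + 1" using 2 assms(1-4) by (auto split: nat_diff_split_asm)
    then show ?thesis by presburger
  next
    case 3
    then have "a + (n - i) = b + j" "a + (i - m) = b + (m - j)" using e by simp_all
    then have "2 * (i + j) = 4 * m + 1" using 3 assms(1-4) by (auto split: nat_diff_split_asm)
    then show ?thesis by presburger
  next
    case 4
    then have "a + (n - i) = b + (n - j)" "a + (i - m) = b + (j - m)" using e by simp_all
    then show ?thesis using 4 assms(1-4) by (auto split: nat_diff_split_asm)
  qed
qed

lemma even_cylinder_coordinates_inj:
  assumes "n = 2 * m" "m \<ge> 2" "i < n" "j < n"
    and "a + cycle_dist n i 0 = b + cycle_dist n j 0"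
    and "a + cycle_dist n i m = b + cycle_dist n j m"
    and "a + cycle_dist n i 1 = b + cycle_dist n j 1"
  shows "a = b \<and> i = j"
proof -
  note e = assms(5-7)[unfolded cycle_dist_even[OF assms(1,2,3)] cycle_dist_even[OF assms(1,2,4)]]
  consider "i \<le> m" "j \<le> m" | "i \<le> m" "\<not> j \<le> m" | "\<not> i \<le> m" "j \<le> m" | "\<not> i \<le> m" "\<not> j \<le> m"
    by blast
  then show ?thesis
  proof cases
    case 1
    then have "a + i = b + j" "a + (m - i) = b + (m - j)" using e by simp_all
    then show ?thesis using 1 by (auto split: nat_diff_split_asm)
  next
    case 2
    then have "a + i = b + (n - j)" "a + (m - i) = b + (j - m)" using e by simp_all
    then have "a = b" "i + j = n" using 2 assms(1-4) by (auto split: nat_diff_split_asm)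
    then show ?thesis using e(3) 2 assms by (auto split: if_splits)
  next
    case 3
    then have "a + (n - i) = b + j" "a + (i - m) = b + (m - j)" using e by simp_all
    then have "a = b" "i + j = n" using 3 assms(1-4) by (auto split: nat_diff_split_asm)
    then show ?thesis using e(3) 3 assms by (auto split: if_splits)
  next
    case 4
    then have "a + (n - i) = b + (n - j)" "a + (i - m) = b + (j - m)" using e by simp_all
    then show ?thesis using 4 assms(1-4) by (auto split: nat_diff_split_asm)
  qed
qed

lemma odd_cyl_resolving:
  assumes "n = 2 * m + 1" "m \<ge> 1"
  shows "resolving_set (PC_vertices n) (PC_adj n) {(0, 0), (0, m)}"
proof (rule resolving_setI)
  show "{(0, 0), (0, m)} \<subseteq> PC_vertices n"
    using assms by (auto simp: PC_vertices_def cycle_vertices_def)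
  fix u v assume uv: "u \<in> PC_vertices n" "v \<in> PC_vertices n"
    and indist: "indistinguishable (PC_vertices n) (PC_adj n) {(0, 0), (0, m)} u v"
  obtain a i b j where ab: "u = (a, i)" "v = (b, j)" by (metis prod.exhaust)
  have ij: "i < n" "j < n" using uv ab by (auto simp: PC_vertices_def cycle_vertices_def)
  have "a + cycle_dist n i 0 = b + cycle_dist n j 0" "a + cycle_dist n i m = b + cycle_dist n j m"
    using indist assms uv ab by (auto simp: indistinguishable_def gdist_to_first_layer)
  then show "u = v" using odd_cylinder_coordinates_inj[OF assms ij] ab by simp
qed

lemma even_cyl_resolving:
  assumes "n = 2 * m" "m \<ge> 2"
  shows "resolving_set (PC_vertices n) (PC_adj n) {(0, 0), (0, m), (0, 1)}"
proof (rule resolving_setI)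
  show "{(0, 0), (0, m), (0, 1)} \<subseteq> PC_vertices n"
    using assms by (auto simp: PC_vertices_def cycle_vertices_def)
  fix u v assume uv: "u \<in> PC_vertices n" "v \<in> PC_vertices n"
    and indist: "indistinguishable (PC_vertices n) (PC_adj n) {(0, 0), (0, m), (0, 1)} u v"
  obtain a i b j where ab: "u = (a, i)" "v = (b, j)" by (metis prod.exhaust)
  have ij: "i < n" "j < n" using uv ab by (auto simp: PC_vertices_def cycle_vertices_def)
  have "a + cycle_dist n i 0 = b + cycle_dist n j 0" "a + cycle_dist n i m = b + cycle_dist n j m"
      "a + cycle_dist n i 1 = b + cycle_dist n j 1"
    using indist assms uv ab by (auto simp: indistinguishable_def gdist_to_first_layer)
  then show "u = v" using even_cylinder_coordinates_inj[OF assms ij] ab by simp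
qed

lemma cycle_step_away:
  assumes "2 \<le> n" "j < n"
  obtains i i' where "i < n" "i' < n" "cycle_dist n i' j = cycle_dist n i j + 1"
  using assms by (intro that[of j "if j + 1 < n then j + 1 else 0"])
    (auto simp: cycle_dist_def line_dist_def)

text \<open>In an even cycle, two landmarks j \<le> k never separate everything: if they are antipodal,
  the two neighbours of j are twins with respect to both; otherwise one can step from some vertex
  away from both landmarks simultaneously.\<close>
lemma even_cycle_pair_le:
  assumes "n = 2 * m" "m \<ge> 2" "j \<le> k" "k < n"
  obtains i i' where "i < n" "i' < n"
    "(i \<noteq> i' \<and> cycle_dist n i j = cycle_dist n i' j \<and> cycle_dist n i k = cycle_dist n i' k) \<or>
     (cycle_dist n i' j = cycle_dist n i j + 1 \<and> cycle_dist n i' k = cycle_dist n i k + 1)"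
proof -
  consider "j = k" | "j < k" "k - j < m" | "j < k" "k - j > m" | "j < k" "k - j = m"
    using assms by linarith
  then show ?thesis
  proof cases
    case 1 then show ?thesis using assms
      by (intro that[of j "if j + 1 < n then j + 1 else 0"])
         (auto simp: cycle_dist_def line_dist_def)
  next
    case 2 then show ?thesis using assms
      by (intro that[of j "if j > 0 then j - 1 else n - 1"])
         (auto simp: cycle_dist_def line_dist_def)
  next
    case 3 then show ?thesis using assms
      by (intro that[of j "j + 1"]) (auto simp: cycle_dist_def line_dist_def)
  next
    case 4 then show ?thesis using assms
      by (intro that[of "j + 1" "if j > 0 then j - 1 else n - 1"])
         (auto simp: cycle_dist_def line_dist_def)
  qed
qed

lemma even_cycle_pair:
  assumes "n = 2 * m" "m \<ge> 2" "j < n" "k < n"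
  obtains i i' where "i < n" "i' < n"
    "(i \<noteq> i' \<and> cycle_dist n i j = cycle_dist n i' j \<and> cycle_dist n i k = cycle_dist n i' k) \<or>
     (cycle_dist n i' j = cycle_dist n i j + 1 \<and> cycle_dist n i' k = cycle_dist n i k + 1)"
proof (cases "j \<le> k")
  case True
  then show ?thesis using even_cycle_pair_le[OF assms(1,2) True assms(4)] that by blast
next
  case False
  then have "k \<le> j" by simp
  then show ?thesis using even_cycle_pair_le[OF assms(1,2) _ assms(3)] that by blast
qed

text \<open>Lifting to the cylinder: twins i, i' of the cycle give twins (0,i), (0,i'); a step i \<to> i'
  away from both landmarks is compensated by one step towards them on the path, so (h+1,i) and
  (h,i') are indistinguishable when h lies beyond both landmarks.\<close>
lemma cyl_indistinguishable_lift:
  assumes "x \<in> PC_vertices n" "y \<in> PC_vertices n" "i < n" "i' < n"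
    and "(i \<noteq> i' \<and> cycle_dist n i (snd x) = cycle_dist n i' (snd x) \<and>
          cycle_dist n i (snd y) = cycle_dist n i' (snd y)) \<or>
         (cycle_dist n i' (snd x) = cycle_dist n i (snd x) + 1 \<and>
          cycle_dist n i' (snd y) = cycle_dist n i (snd y) + 1)"
  shows "\<exists>u\<in>PC_vertices n. \<exists>v\<in>PC_vertices n.
           u \<noteq> v \<and> indistinguishable (PC_vertices n) (PC_adj n) {x, y} u v"
proof -
  have by_cyl_dist: "indistinguishable (PC_vertices n) (PC_adj n) {x, y} u v"
    if "u \<in> PC_vertices n" "v \<in> PC_vertices n"
      "cyl_dist n u x = cyl_dist n v x" "cyl_dist n u y = cyl_dist n v y" for u v
    using that assms(1,2) by (simp add: indistinguishable_def gdist_cyl)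
  have layer: "(h, k) \<in> PC_vertices n" if "k < n" for h k
    using that by (simp add: PC_vertices_def cycle_vertices_def)
  from assms(5) show ?thesis
  proof
    assume "i \<noteq> i' \<and> cycle_dist n i (snd x) = cycle_dist n i' (snd x) \<and>
          cycle_dist n i (snd y) = cycle_dist n i' (snd y)"
    then show ?thesis
      using by_cyl_dist[OF layer[OF assms(3)] layer[OF assms(4)]]
      by (intro bexI[of _ "(0, i)"] bexI[of _ "(0, i')"] layer assms) (auto simp: cyl_dist_def)
  next
    assume "cycle_dist n i' (snd x) = cycle_dist n i (snd x) + 1 \<and>
          cycle_dist n i' (snd y) = cycle_dist n i (snd y) + 1"
    moreover define h where "h = max (fst x) (fst y)"
    moreover have "line_dist (h + 1) a = line_dist h a + 1" if "a \<le> h" for a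
      using that by (auto simp: line_dist_def)
    ultimately show ?thesis
      using by_cyl_dist[OF layer[OF assms(3)] layer[OF assms(4)], of "h + 1" h]
      by (intro bexI[of _ "(h + 1, i)"] bexI[of _ "(h, i')"] layer assms) (auto simp: cyl_dist_def)
  qed
qed

lemma cyl_vertices_nonempty: "0 < n \<Longrightarrow> PC_vertices n \<noteq> {}"
  by (auto simp: PC_vertices_def cycle_vertices_def)

lemma cyl_resolving_card_ge_2:
  assumes "2 \<le> n" "finite S" "resolving_set (PC_vertices n) (PC_adj n) S"
  shows "2 \<le> card S"
proof (rule resolving_card_ge_2[OF cyl_vertices_nonempty _ assms(2,3)])
  fix x assume x: "x \<in> PC_vertices n"
  then have "snd x < n" by (auto simp: PC_vertices_def cycle_vertices_def)
  then obtain i i' where "i < n" "i' < n" "cycle_dist n i' (snd x) = cycle_dist n i (snd x) + 1"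
    using cycle_step_away[OF assms(1)] by blast
  then show "\<exists>u\<in>PC_vertices n. \<exists>v\<in>PC_vertices n.
               u \<noteq> v \<and> indistinguishable (PC_vertices n) (PC_adj n) {x} u v"
    using cyl_indistinguishable_lift[OF x x] by simp
qed (use assms(1) in simp)

lemma even_cyl_resolving_card_ge_3:
  assumes "n = 2 * m" "m \<ge> 2" "finite S" "resolving_set (PC_vertices n) (PC_adj n) S"
  shows "3 \<le> card S"
proof (rule resolving_card_ge_3[OF cyl_vertices_nonempty _ assms(3,4)])
  fix x y assume xy: "x \<in> PC_vertices n" "y \<in> PC_vertices n"
  then have "snd x < n" "snd y < n" by (auto simp: PC_vertices_def cycle_vertices_def)
  then obtain i i' where "i < n" "i' < n"
    "(i \<noteq> i' \<and> cycle_dist n i (snd x) = cycle_dist n i' (snd x) \<and>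
      cycle_dist n i (snd y) = cycle_dist n i' (snd y)) \<or>
     (cycle_dist n i' (snd x) = cycle_dist n i (snd x) + 1 \<and>
      cycle_dist n i' (snd y) = cycle_dist n i (snd y) + 1)"
    by (rule even_cycle_pair[OF assms(1,2)])
  then show "\<exists>u\<in>PC_vertices n. \<exists>v\<in>PC_vertices n.
               u \<noteq> v \<and> indistinguishable (PC_vertices n) (PC_adj n) {x, y} u v"
    by (rule cyl_indistinguishable_lift[OF xy])
qed (use assms(1,2) in simp)

lemma odd_cyl_metric_basis:
  assumes "n = 2 * m + 1" "m \<ge> 1"
  shows "metric_dim (PC_vertices n) (PC_adj n) = 2"
    and "metric_basis (PC_vertices n) (PC_adj n) {(0, 0), (0, m)}"
proof -
  have card: "card {(0::nat, 0::nat), (0, m)} = 2" using assms(2) by simp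
  have "2 \<le> n" using assms by simp
  note dim = metric_dim_eqI[OF _ odd_cyl_resolving[OF assms]]
  show "metric_dim (PC_vertices n) (PC_adj n) = 2"
    using dim(1) cyl_resolving_card_ge_2[OF \<open>2 \<le> n\<close>] card by (simp add: numeral_eq_enat)
  show "metric_basis (PC_vertices n) (PC_adj n) {(0, 0), (0, m)}"
    using dim(2) cyl_resolving_card_ge_2[OF \<open>2 \<le> n\<close>] card by simp
qed

lemma even_cyl_metric_basis:
  assumes "n = 2 * m" "m \<ge> 2"
  shows "metric_dim (PC_vertices n) (PC_adj n) = 3"
    and "metric_basis (PC_vertices n) (PC_adj n) {(0, 0), (0, m), (0, 1)}"
proof -
  have card: "card {(0::nat, 0::nat), (0, m), (0, 1)} = 3" using assms(2) by simp
  note dim = metric_dim_eqI[OF _ even_cyl_resolving[OF assms]]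
  show "metric_dim (PC_vertices n) (PC_adj n) = 3"
    using dim(1) even_cyl_resolving_card_ge_3[OF assms] card by (simp add: numeral_eq_enat)
  show "metric_basis (PC_vertices n) (PC_adj n) {(0, 0), (0, m), (0, 1)}"
    using dim(2) even_cyl_resolving_card_ge_3[OF assms] card by simp
qed

theorem proposition6:
  fixes n :: nat
  assumes "n \<ge> 3"
  shows "(odd n \<longrightarrow>
            metric_dim (PC_vertices n) (PC_adj n) = 2 \<and>
            metric_basis (PC_vertices n) (PC_adj n) {(0, 0), (0, (n - 1) div 2)}) \<and>
         (even n \<longrightarrow>
            metric_dim (PC_vertices n) (PC_adj n) = 3 \<and>
            metric_basis (PC_vertices n) (PC_adj n) {(0, 0), (0, n div 2), (0, 1)})"
proof (intro conjI impI)
  assume "odd n"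
  then obtain m where m: "n = 2 * m + 1" by (rule oddE)
  with assms have "m \<ge> 1" by simp
  moreover have "(n - 1) div 2 = m" using m by simp
  ultimately show "metric_dim (PC_vertices n) (PC_adj n) = 2"
    and "metric_basis (PC_vertices n) (PC_adj n) {(0, 0), (0, (n - 1) div 2)}"
    using odd_cyl_metric_basis[OF m] by simp_all
next
  assume "even n"
  then obtain m where m: "n = 2 * m" by (rule evenE)
  with assms have "m \<ge> 2" by simp
  moreover have "n div 2 = m" using m by simp
  ultimately show "metric_dim (PC_vertices n) (PC_adj n) = 3"
    and "metric_basis (PC_vertices n) (PC_adj n) {(0, 0), (0, n div 2), (0, 1)}"
    using even_cyl_metric_basis[OF m] by simp_all
qed

end
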